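(* Consider the two-species chemistry on states $(e,s)\in\mathbb Z_{\ge0}^2$ with reactions $E\to2E$ (rate constant $1$) and $E+S\to E+2S$ (rate constant $1$) under stochastic mass-action kinetics, with generator $\mathcal A$. Then: (1) this chemistry is not explosive; (2) for all $c_1,c_2>0$, with $f(e,s)=c_1e+c_2s$, and for all $c_3,c_4\ge0$, there exist $e,s\in\mathbb Z_{\ge0}$ with $\mathcal Af(e,s)>c_3f(e,s)+c_4$; (3) the coarse-grained compartment model $N$ with this internal chemistry, in which each compartment fragments at rate equal to its number of $S$ molecules (with an arbitrary fragmentation kernel $\psi$) and there is no compartment inflow, exit or coagulation, is not explosive.
   Context: Under mass-action kinetics, in state $(e,s)$ the reaction $E\to2E$ fires at rate $e$ and moves to $(e+1,s)$, and $E+S\to E+2S$ fires at rate $es$ and moves to $(e,s+1)$; so $\mathcal Af(e,s)=e\big(f(e+1,s)-f(e,s)\big)+es\big(f(e,s+1)-f(e,s)\big)$. The compartment model $N$ has state space $\mathcal N=\{n:\mathbb Z_{\ge0}^2\to\mathbb Z_{\ge0}\text{ with finite support}\}$ ($n_x$ = number of compartments with internal state $x$, $e_x$ the indicator of $x$), fragmentation kernel $\psi$ with $\psi(x,y)=0$ unless $0\le y\le x$ componentwise and $y\mapsto\psi(x,y)$ a probability measure, and generator $\mathcal LV(n)=\sum_{x=(e,s)}\Big[n_xe\big(V(n-e_x+e_{(e+1,s)})-V(n)\big)+n_xes\big(V(n-e_x+e_{(e,s+1)})-V(n)\big)+s\,n_x\sum_y\psi(x,y)\big(V(n-e_x+e_y+e_{x-y})-V(n)\big)\Big]$.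 A continuous-time Markov chain is explosive if from some initial state it makes infinitely many jumps in finite time with positive probability, and non-explosive otherwise. *)

theory Defs
  imports "HOL-Analysis.Analysis" "HOL-Library.Multiset"
begin

text \<open>A chain on a countable type 'a is given by off-diagonal jump rates q x y
  (rate of jumping from x to y), each row having finitely many nonzero entries.
  The standard (jump chain / holding time) construction: in state x the chain waits
  an Exp(total_rate q x) time and then jumps to y with probability q x y / total_rate q x;
  if total_rate q x = 0 the state is absorbing (no further jumps).\<close>

definition jump_support :: "('a \<Rightarrow> 'a \<Rightarrow> real) \<Rightarrow> 'a \<Rightarrow> 'a set" where
  "jump_support q x = {y. y \<noteq> x \<and> q x y \<noteq> 0}"

definition total_rate :: "('a \<Rightarrow> 'a \<Rightarrow> real) \<Rightarrow> 'a \<Rightarrow> real" where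
  "total_rate q x = (\<Sum>y\<in>jump_support q x. q x y)"

text \<open>jump_time_cdf q n x t = P_x(J_n \<le> t), where J_n is the time of the n-th jump
  of the chain started at x (J_n = infinity if the chain gets absorbed before n jumps).
  Computed by conditioning on the first holding time u and the first jump target y.\<close>

primrec jump_time_cdf :: "('a \<Rightarrow> 'a \<Rightarrow> real) \<Rightarrow> nat \<Rightarrow> 'a \<Rightarrow> real \<Rightarrow> real" where
  "jump_time_cdf q 0 = (\<lambda>x t. if 0 \<le> t then 1 else 0)"
| "jump_time_cdf q (Suc n) = (\<lambda>x t. if total_rate q x = 0 then 0 else
     (LINT u:{0..t}|lborel. exp (- total_rate q x * u) *
        (\<Sum>y\<in>jump_support q x. q x y * jump_time_cdf q n y (t - u))))"

text \<open>Explosive: from some initial state x, with positive probability infinitely many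
  jumps occur in finite time, i.e. P_x(zeta < infinity) > 0 with zeta = lim J_n.
  Since {zeta < infinity} = U_T  /\_n {J_n \<le> T} (decreasing in n), this is equivalent to:
  for some x and T, P_x(J_n \<le> T) stays bounded below by some eps > 0 for all n.\<close>

definition explosive :: "('a \<Rightarrow> 'a \<Rightarrow> real) \<Rightarrow> bool" where
  "explosive q \<longleftrightarrow> (\<exists>x T. \<exists>\<epsilon>>0. \<forall>n. jump_time_cdf q n x T \<ge> \<epsilon>)"

definition non_explosive :: "('a \<Rightarrow> 'a \<Rightarrow> real) \<Rightarrow> bool" where
  "non_explosive q \<longleftrightarrow> \<not> explosive q"

definition q_chem :: "nat \<times> nat \<Rightarrow> nat \<times> nat \<Rightarrow> real" where
  "q_chem = (\<lambda>(e, s) z. (if z = (Suc e, s) then real e else 0)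
                      + (if z = (e, Suc s) then real e * real s else 0))"

definition gen_A :: "(nat \<times> nat \<Rightarrow> real) \<Rightarrow> nat \<times> nat \<Rightarrow> real" where
  "gen_A f = (\<lambda>(e, s). real e * (f (Suc e, s) - f (e, s))
                     + real e * real s * (f (e, Suc s) - f (e, s)))"

text \<open>States n : finitely supported maps Z_{\<ge>0}^2 -> Z_{\<ge>0}, represented as multisets
  of internal states (count n x = n_x).\<close>

definition frag_kernel :: "(nat \<times> nat \<Rightarrow> nat \<times> nat \<Rightarrow> real) \<Rightarrow> bool" where
  "frag_kernel \<psi> \<longleftrightarrow>
     (\<forall>x y. 0 \<le> \<psi> x y) \<and>
     (\<forall>x y. \<not> (fst y \<le> fst x \<and> snd y \<le> snd x) \<longrightarrow> \<psi> x y = 0) \<and>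
     (\<forall>x. (\<Sum>y\<in>{y. fst y \<le> fst x \<and> snd y \<le> snd x}. \<psi> x y) = 1)"

definition q_N :: "(nat \<times> nat \<Rightarrow> nat \<times> nat \<Rightarrow> real)
                    \<Rightarrow> (nat \<times> nat) multiset \<Rightarrow> (nat \<times> nat) multiset \<Rightarrow> real" where
  "q_N \<psi> n m = (if m = n then 0 else
     (\<Sum>x\<in>set_mset n. real (count n x) *
        (case x of (e, s) \<Rightarrow>
            (if m = n - {#x#} + {#(Suc e, s)#} then real e else 0)
          + (if m = n - {#x#} + {#(e, Suc s)#} then real e * real s else 0)
          + real s * (\<Sum>y\<in>{y. fst y \<le> e \<and> snd y \<le> s}.
                if m = n - {#x#} + {#y, (e - fst y, s - snd y)#} then \<psi> x y else 0))))"

end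

theory Submission
  imports Defs
begin

(* Foster-Lyapunov argument with V(e,s) = e + ln(1+s).  Production of S has the unbounded rate
   e*s, but each such jump raises ln(1+s) by at most 1/(1+s), so the drift of V is at most 2e,
   i.e. at most 2V, while all jump rates stay bounded on the sublevel sets of V.  Integrating
   the holding-time recursion then gives P_x(J_n <= t) <= e^(2t) V(x)/M + (Lambda t)^n/n!
   for every level M, where Lambda bounds the rates on {V < M}; this rules out explosion.
   For the compartment model the same V, applied to the total numbers of E and S, works
   because fragmentation conserves both totals.  In contrast, the drift c1 e + c2 e s of a
   linear function is not affinely bounded. *)

definition generator :: "('a \<Rightarrow> 'a \<Rightarrow> real) \<Rightarrow> ('a \<Rightarrow> real) \<Rightarrow> 'a \<Rightarrow> real" where
  "generator q V x = (\<Sum>y\<in>jump_support q x. q x y * (V y - V x))"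

lemma total_rate_nonneg:
  assumes "\<And>x y. 0 \<le> q x y"
  shows "0 \<le> total_rate q x"
  unfolding total_rate_def by (rule sum_nonneg) (simp add: assms)

lemma sum_jump_support_mult_eq:
  "(\<Sum>y\<in>jump_support q x. q x y * V y) = generator q V x + total_rate q x * V x"
proof -
  have "(\<Sum>y\<in>jump_support q x. q x y * V y)
      = (\<Sum>y\<in>jump_support q x. q x y * (V y - V x) + q x y * V x)"
    by (simp add: algebra_simps)
  then show ?thesis
    by (simp add: generator_def total_rate_def sum.distrib sum_distrib_right)
qed

lemma set_integral_le_continuous_majorant:
  fixes f g :: "real \<Rightarrow> real"
  assumes "\<And>u. u \<in> {a..b} \<Longrightarrow> f u \<le> g u" "\<And>u. u \<in> {a..b} \<Longrightarrow> 0 \<le> g u"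
    and "continuous_on {a..b} g"
  shows "(LINT u:{a..b}|lborel. f u) \<le> (LINT u:{a..b}|lborel. g u)"
proof (cases "set_integrable lborel {a..b} f")
  case True
  then show ?thesis
    using set_integral_mono borel_integrable_atLeastAtMost' assms by blast
next
  case False
  then have "(LINT u:{a..b}|lborel. f u) = 0"
    by (simp add: set_lebesgue_integral_def set_integrable_def not_integrable_integral_eq)
  moreover have "0 \<le> (LINT u:{a..b}|lborel. g u)"
    unfolding set_lebesgue_integral_def
    by (rule Bochner_Integration.integral_nonneg) (simp add: indicator_def assms(2))
  ultimately show ?thesis by simp
qed

lemma set_integral_exp_decay:
  fixes a t :: real
  assumes "0 \<le> t"
  shows "(LINT u:{0..t}|lborel. a * exp (- a * u)) = 1 - exp (- a * t)"
proof -
  have "(LINT u:{0..t}|lborel. a * exp (- a * u)) = (LBINT u=ereal 0..ereal t. a * exp (- a * u))"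
    using assms by (simp add: interval_integral_Icc)
  also have "\<dots> = - exp (- a * t) - - exp (- a * 0)"
    by (rule interval_integral_FTC_finite)
       (use assms in \<open>auto intro!: continuous_intros derivative_eq_intros
         simp: has_real_derivative_iff_has_vector_derivative[symmetric]\<close>)
  finally show ?thesis by simp
qed

lemma set_integral_power_div_fact:
  fixes b t :: real
  assumes "0 \<le> t"
  shows "(LINT u:{0..t}|lborel. b ^ Suc n * (t - u) ^ n / fact n) = (b * t) ^ Suc n / fact (Suc n)"
proof -
  let ?F = "\<lambda>u. - (b ^ Suc n * (t - u) ^ Suc n / fact (Suc n))"
  have "(?F has_real_derivative b ^ Suc n * (t - u) ^ n / fact n) (at u within {0..t})" for u
    by (rule derivative_eq_intros refl | simp)+
  then have "(LBINT u=ereal 0..ereal t. b ^ Suc n * (t - u) ^ n / fact n) = ?F t - ?F 0"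
    by (intro interval_integral_FTC_finite)
       (use assms in \<open>auto intro!: continuous_intros simp: has_real_derivative_iff_has_vector_derivative\<close>)
  then show ?thesis
    using assms by (simp add: interval_integral_Icc power_mult_distrib)
qed

lemma set_integral_exp_decay_plus_power:
  fixes a b t :: real
  assumes "0 \<le> t"
  shows "(LINT u:{0..t}|lborel. K * (a * exp (- a * u)) + b ^ Suc n * (t - u) ^ n / fact n)
    = K * (1 - exp (- a * t)) + (b * t) ^ Suc n / fact (Suc n)"
proof -
  have "(LINT u:{0..t}|lborel. K * (a * exp (- a * u)) + b ^ Suc n * (t - u) ^ n / fact n)
      = K * (LINT u:{0..t}|lborel. a * exp (- a * u))
        + (LINT u:{0..t}|lborel. b ^ Suc n * (t - u) ^ n / fact n)"
    by (subst set_integral_add)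
       (auto intro!: borel_integrable_atLeastAtMost' continuous_intros simp: set_integral_mult_right)
  then show ?thesis
    by (simp only: set_integral_exp_decay set_integral_power_div_fact assms)
qed

lemma jump_time_cdf_Suc_le_integral:
  assumes qnn: "\<And>x y. 0 \<le> q x y" and rate: "0 < total_rate q x"
    and cdf_le: "\<And>y s. 0 \<le> s \<Longrightarrow> s \<le> t \<Longrightarrow> jump_time_cdf q n y s \<le> h y s"
    and integrand_le: "\<And>u. u \<in> {0..t} \<Longrightarrow>
      exp (- total_rate q x * u) * (\<Sum>y\<in>jump_support q x. q x y * h y (t - u)) \<le> g u"
    and "\<And>u. u \<in> {0..t} \<Longrightarrow> 0 \<le> g u" "continuous_on {0..t} g"
  shows "jump_time_cdf q (Suc n) x t \<le> (LINT u:{0..t}|lborel. g u)"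
proof -
  have "exp (- total_rate q x * u) * (\<Sum>y\<in>jump_support q x. q x y * jump_time_cdf q n y (t - u)) \<le> g u"
    if "u \<in> {0..t}" for u
  proof -
    have "(\<Sum>y\<in>jump_support q x. q x y * jump_time_cdf q n y (t - u))
        \<le> (\<Sum>y\<in>jump_support q x. q x y * h y (t - u))"
      using that by (intro sum_mono mult_left_mono cdf_le qnn) auto
    then show ?thesis
      using integrand_le[OF that] by (meson exp_ge_zero mult_left_mono order_trans)
  qed
  then have "(LINT u:{0..t}|lborel. exp (- total_rate q x * u) *
      (\<Sum>y\<in>jump_support q x. q x y * jump_time_cdf q n y (t - u))) \<le> (LINT u:{0..t}|lborel. g u)"
    by (rule set_integral_le_continuous_majorant) (use assms in auto)
  then show ?thesis
    using rate by simp
qed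

lemma jump_time_cdf_le_one:
  assumes qnn: "\<And>x y. 0 \<le> q x y" and "0 \<le> t"
  shows "jump_time_cdf q n x t \<le> 1"
  using \<open>0 \<le> t\<close>
proof (induction n arbitrary: x t)
  case 0
  then show ?case by simp
next
  case (Suc n)
  let ?l = "total_rate q x"
  show ?case
  proof (cases "?l = 0")
    case False
    then have "0 < ?l" using total_rate_nonneg[OF qnn] by (simp add: order_less_le)
    then have "jump_time_cdf q (Suc n) x t \<le> (LINT u:{0..t}|lborel. ?l * exp (- ?l * u))"
      by (intro jump_time_cdf_Suc_le_integral[where h = "\<lambda>_ _. 1"] qnn Suc.IH)
         (auto intro!: continuous_intros simp: total_rate_def)
    also have "\<dots> \<le> 1"
      by (simp only: set_integral_exp_decay[OF Suc.prems]) simp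
    finally show ?thesis .
  qed simp
qed

lemma lyapunov_integrand_le:
  assumes qnn: "\<And>x y. 0 \<le> q x y" and drift: "generator q V x \<le> c * V x"
    and "0 < M" and rate: "total_rate q x \<le> \<Lambda>" and "0 \<le> u" "0 \<le> s"
  defines "l \<equiv> total_rate q x"
  shows "exp (- l * u) * (\<Sum>y\<in>jump_support q x. q x y * (exp (c * s) * V y / M + (\<Lambda> * s) ^ n / fact n))
    \<le> exp (c * (u + s)) * V x / M * ((l + c) * exp (- (l + c) * u)) + \<Lambda> ^ Suc n * s ^ n / fact n"
proof -
  let ?p = "(\<Lambda> * s) ^ n / fact n"
  have "0 \<le> l" unfolding l_def by (rule total_rate_nonneg[OF qnn])
  then have "0 \<le> \<Lambda>" using rate by (simp add: l_def)
  then have p: "0 \<le> ?p" using \<open>0 \<le> s\<close> by simp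
  have "(\<Sum>y\<in>jump_support q x. q x y * (exp (c * s) * V y / M + ?p))
      = exp (c * s) / M * (\<Sum>y\<in>jump_support q x. q x y * V y) + l * ?p"
    by (simp add: l_def total_rate_def sum.distrib sum_distrib_left sum_distrib_right
        sum_divide_distrib algebra_simps)
  also have "\<dots> \<le> exp (c * s) / M * ((l + c) * V x) + \<Lambda> * ?p"
  proof -
    have "(\<Sum>y\<in>jump_support q x. q x y * V y) \<le> (l + c) * V x"
      using drift unfolding sum_jump_support_mult_eq l_def by (simp add: distrib_right)
    then show ?thesis
      using rate p \<open>0 < M\<close> by (intro add_mono mult_left_mono mult_right_mono) (auto simp: l_def)
  qed
  finally have "exp (- l * u) * (\<Sum>y\<in>jump_support q x. q x y * (exp (c * s) * V y / M + ?p))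
      \<le> exp (- l * u) * (exp (c * s) / M * ((l + c) * V x) + \<Lambda> * ?p)"
    by (rule mult_left_mono) simp
  also have "\<dots> = exp (- l * u) * exp (c * s) / M * ((l + c) * V x) + exp (- l * u) * (\<Lambda> * ?p)"
    by (simp add: distrib_left)
  also have "\<dots> \<le> exp (- l * u) * exp (c * s) / M * ((l + c) * V x) + \<Lambda> * ?p"
    using \<open>0 \<le> l\<close> \<open>0 \<le> u\<close> \<open>0 \<le> \<Lambda>\<close> \<open>0 \<le> s\<close>
    by (intro add_left_mono mult_left_le_one_le) auto
  also have "exp (- l * u) * exp (c * s) = exp (c * (u + s)) * exp (- (l + c) * u)"
    by (simp add: mult_exp_exp algebra_simps)
  finally show ?thesis
    by (simp add: power_mult_distrib add_divide_distrib algebra_simps)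
qed

lemma jump_time_cdf_Suc_lyapunov_step:
  assumes qnn: "\<And>x y. 0 \<le> q x y" and drift: "generator q V x \<le> c * V x"
    and "0 \<le> V x" "0 \<le> c" "0 < M" "0 \<le> t"
    and rate: "0 < total_rate q x" "total_rate q x \<le> \<Lambda>"
    and cdf_le: "\<And>y s. 0 \<le> s \<Longrightarrow> s \<le> t \<Longrightarrow>
      jump_time_cdf q n y s \<le> exp (c * s) * V y / M + (\<Lambda> * s) ^ n / fact n"
  shows "jump_time_cdf q (Suc n) x t \<le> exp (c * t) * V x / M + (\<Lambda> * t) ^ Suc n / fact (Suc n)"
proof -
  let ?l = "total_rate q x"
  let ?a = "?l + c"
  define K where "K = exp (c * t) * V x / M"
  have "0 \<le> K" using \<open>0 \<le> V x\<close> \<open>0 < M\<close> by (simp add: K_def)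
  have "0 \<le> \<Lambda>" using rate by simp
  have "jump_time_cdf q (Suc n) x t
      \<le> (LINT u:{0..t}|lborel. K * (?a * exp (- ?a * u)) + \<Lambda> ^ Suc n * (t - u) ^ n / fact n)"
  proof (rule jump_time_cdf_Suc_le_integral[OF qnn rate(1) cdf_le])
    fix u :: real assume "u \<in> {0..t}"
    then show "exp (- ?l * u) * (\<Sum>y\<in>jump_support q x.
          q x y * (exp (c * (t - u)) * V y / M + (\<Lambda> * (t - u)) ^ n / fact n))
        \<le> K * (?a * exp (- ?a * u)) + \<Lambda> ^ Suc n * (t - u) ^ n / fact n"
      using lyapunov_integrand_le[OF qnn drift \<open>0 < M\<close> rate(2), of u "t - u" n]
      by (simp add: K_def)
    show "0 \<le> K * (?a * exp (- ?a * u)) + \<Lambda> ^ Suc n * (t - u) ^ n / fact n"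
      using \<open>u \<in> {0..t}\<close> \<open>0 \<le> K\<close> rate \<open>0 \<le> c\<close> \<open>0 \<le> \<Lambda>\<close> by simp
  qed (auto intro!: continuous_intros)
  also have "\<dots> = K * (1 - exp (- ?a * t)) + (\<Lambda> * t) ^ Suc n / fact (Suc n)"
    by (rule set_integral_exp_decay_plus_power[OF \<open>0 \<le> t\<close>])
  also have "\<dots> \<le> K + (\<Lambda> * t) ^ Suc n / fact (Suc n)"
    using \<open>0 \<le> K\<close> by (simp add: mult_left_le)
  finally show ?thesis by (simp add: K_def)
qed

lemma jump_time_cdf_lyapunov_bound:
  fixes V :: "'a \<Rightarrow> real"
  assumes qnn: "\<And>x y. 0 \<le> q x y" and Vnn: "\<And>x. 0 \<le> V x" and "0 \<le> c"
    and drift: "\<And>x. generator q V x \<le> c * V x"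
    and "0 < M" and "0 \<le> \<Lambda>" and rate: "\<And>x. V x < M \<Longrightarrow> total_rate q x \<le> \<Lambda>"
    and "0 \<le> t"
  shows "jump_time_cdf q n x t \<le> exp (c * t) * V x / M + (\<Lambda> * t) ^ n / fact n"
  using \<open>0 \<le> t\<close>
proof (induction n arbitrary: x t)
  case 0
  then show ?case using Vnn[of x] \<open>0 < M\<close> by simp
next
  case (Suc n)
  have tail_nonneg: "0 \<le> (\<Lambda> * t) ^ Suc n / fact (Suc n)"
    using \<open>0 \<le> \<Lambda>\<close> Suc.prems by simp
  consider "total_rate q x = 0" | "M \<le> V x" | "0 < total_rate q x" "V x < M"
    using total_rate_nonneg[of q x, OF qnn] by fastforce
  then show ?case
  proof cases
    case 1
    then show ?thesis using tail_nonneg Vnn[of x] \<open>0 < M\<close> by simp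
  next
    case 2
    have "jump_time_cdf q (Suc n) x t \<le> 1"
      by (rule jump_time_cdf_le_one[OF qnn Suc.prems])
    also have "1 \<le> exp (c * t) * (V x / M)"
      using 2 \<open>0 < M\<close> \<open>0 \<le> c\<close> Suc.prems mult_mono[of 1 "exp (c * t)" 1 "V x / M"] by simp
    finally show ?thesis
      using tail_nonneg by simp
  next
    case 3
    then show ?thesis
      using Suc Vnn \<open>0 \<le> c\<close> \<open>0 < M\<close>
      by (intro jump_time_cdf_Suc_lyapunov_step[OF qnn drift]) (auto intro: rate)
  qed
qed

lemma non_explosive_lyapunov:
  fixes q :: "'a \<Rightarrow> 'a \<Rightarrow> real" and V :: "'a \<Rightarrow> real"
  assumes qnn: "\<And>x y. 0 \<le> q x y" and Vnn: "\<And>x. 0 \<le> V x" and "0 \<le> c"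
    and drift: "\<And>x. generator q V x \<le> c * V x"
    and rates_bounded: "\<And>M. bdd_above (total_rate q ` {x. V x < M})"
  shows "non_explosive q"
  unfolding non_explosive_def explosive_def
proof clarify
  fix x and T \<epsilon> :: real
  assume "0 < \<epsilon>" and cdf_ge: "\<forall>n. \<epsilon> \<le> jump_time_cdf q n x T"
  then have "0 \<le> T"
    using cdf_ge[rule_format, of 0] by (auto split: if_splits)
  define M where "M = 2 * exp (c * T) * V x / \<epsilon> + 1"
  have "0 < M" using Vnn[of x] \<open>0 < \<epsilon>\<close> by (simp add: M_def add_nonneg_pos)
  have small_start: "exp (c * T) * V x / M < \<epsilon> / 2"
    using \<open>0 < \<epsilon>\<close> \<open>0 < M\<close> by (simp add: M_def field_simps)
  obtain \<Lambda>\<^sub>0 where "\<And>x. V x < M \<Longrightarrow> total_rate q x \<le> \<Lambda>\<^sub>0"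
    using rates_bounded[of M] by (auto simp: bdd_above_def)
  then have rate: "\<And>x. V x < M \<Longrightarrow> total_rate q x \<le> max 0 \<Lambda>\<^sub>0"
    by (meson max.coboundedI2)
  have "(\<lambda>n. (max 0 \<Lambda>\<^sub>0 * T) ^ n / fact n) \<longlonglongrightarrow> 0"
    using summable_LIMSEQ_zero[OF summable_exp] by (simp add: inverse_eq_divide)
  then have "\<forall>\<^sub>F n in sequentially. (max 0 \<Lambda>\<^sub>0 * T) ^ n / fact n < \<epsilon> / 2"
    by (rule order_tendstoD(2)) (simp add: \<open>0 < \<epsilon>\<close>)
  then obtain n where small_tail: "(max 0 \<Lambda>\<^sub>0 * T) ^ n / fact n < \<epsilon> / 2"
    by (auto simp: eventually_sequentially)
  have "jump_time_cdf q n x T \<le> exp (c * T) * V x / M + (max 0 \<Lambda>\<^sub>0 * T) ^ n / fact n"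
    by (rule jump_time_cdf_lyapunov_bound[OF qnn Vnn \<open>0 \<le> c\<close> drift \<open>0 < M\<close> _ rate \<open>0 \<le> T\<close>]) simp
  then show False
    using cdf_ge[rule_format, of n] small_start small_tail by linarith
qed

lemma sum_jump_support_superset:
  assumes "finite T" "jump_support q x \<subseteq> T" "x \<notin> T"
  shows "(\<Sum>y\<in>jump_support q x. q x y * G y) = (\<Sum>y\<in>T. q x y * G y)"
  by (rule sum.mono_neutral_left[OF assms(1,2)]) (use assms(3) in \<open>auto simp: jump_support_def\<close>)

lemma sum_jump_support_q_chem:
  "(\<Sum>y\<in>jump_support q_chem (e, s). q_chem (e, s) y * G y)
    = real e * G (Suc e, s) + real e * real s * G (e, Suc s)"
proof -
  have support: "jump_support q_chem (e, s) \<subseteq> {(Suc e, s), (e, Suc s)}"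
    by (auto simp: jump_support_def q_chem_def split: if_splits)
  have "(\<Sum>y\<in>jump_support q_chem (e, s). q_chem (e, s) y * G y)
      = (\<Sum>y\<in>{(Suc e, s), (e, Suc s)}. q_chem (e, s) y * G y)"
    by (rule sum_jump_support_superset[OF _ support]) auto
  then show ?thesis by (simp add: q_chem_def)
qed

lemma generator_q_chem: "generator q_chem f = gen_A f"
  by (auto simp: generator_def gen_A_def sum_jump_support_q_chem)

lemma total_rate_q_chem: "total_rate q_chem (e, s) = real e + real e * real s"
  using sum_jump_support_q_chem[of e s "\<lambda>_. 1"] by (simp add: total_rate_def)

definition lyap :: "nat \<Rightarrow> nat \<Rightarrow> real" where
  "lyap e s = real e + ln (1 + real s)"

lemma mult_ln_Suc_diff_le:
  assumes "s \<le> S"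
  shows "real s * (ln (1 + real (Suc S)) - ln (1 + real S)) \<le> 1"
proof -
  have "ln (1 + real (Suc S)) - ln (1 + real S) = ln ((1 + real (Suc S)) / (1 + real S))"
    by (simp add: ln_div)
  also have "(1 + real (Suc S)) / (1 + real S) = 1 + 1 / (1 + real S)"
    by (simp add: field_simps)
  also have "ln (1 + 1 / (1 + real S)) \<le> 1 / (1 + real S)"
    by (rule ln_add_one_self_le_self) simp
  finally have "real s * (ln (1 + real (Suc S)) - ln (1 + real S)) \<le> real s / (1 + real S)"
    by (simp add: mult_left_mono divide_inverse)
  also have "\<dots> \<le> 1"
    using assms by simp
  finally show ?thesis .
qed

lemma lyap_less_imp_bounds:
  assumes "lyap e s < M"
  shows "real e < M" "real s < exp M"
proof -
  have "0 \<le> ln (1 + real s)" by simp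
  then show "real e < M" using assms unfolding lyap_def by linarith
  have "ln (1 + real s) < M" using assms by (simp add: lyap_def)
  then show "real s < exp M"
    using exp_less_mono[of "ln (1 + real s)" M] by simp
qed

lemma gen_A_lyap_le: "gen_A (\<lambda>(e, s). lyap e s) (e, s) \<le> 2 * lyap e s"
proof -
  have "gen_A (\<lambda>(e, s). lyap e s) (e, s)
      = real e + real e * (real s * (ln (1 + real (Suc s)) - ln (1 + real s)))"
    by (simp add: gen_A_def lyap_def)
  also have "\<dots> \<le> real e + real e * 1"
    by (intro add_left_mono mult_left_mono mult_ln_Suc_diff_le) auto
  also have "\<dots> \<le> 2 * lyap e s"
    by (simp add: lyap_def)
  finally show ?thesis .
qed

lemma non_explosive_q_chem: "non_explosive q_chem"
proof (rule non_explosive_lyapunov[where V = "\<lambda>(e, s). lyap e s" and c = 2])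
  show "generator q_chem (\<lambda>(e, s). lyap e s) x \<le> 2 * (case x of (e, s) \<Rightarrow> lyap e s)" for x
    by (cases x) (simp add: generator_q_chem gen_A_lyap_le)
  show "bdd_above (total_rate q_chem ` {x. (case x of (e, s) \<Rightarrow> lyap e s) < M})" for M
  proof (rule bdd_aboveI2)
    fix x assume "x \<in> {x. (case x of (e, s) \<Rightarrow> lyap e s) < M}"
    then obtain e s where x: "x = (e, s)" and "lyap e s < M" by (cases x) auto
    then have "real e \<le> M" "real s \<le> exp M"
      using lyap_less_imp_bounds by (auto intro: less_imp_le)
    then show "total_rate q_chem x \<le> M + M * exp M"
      by (simp add: x total_rate_q_chem add_mono mult_mono)
  qed
qed (auto simp: q_chem_def lyap_def)

lemma gen_A_linear_not_affinely_bounded: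
  fixes c1 c2 c3 c4 :: real
  assumes "c1 > 0" "c2 > 0" "c3 \<ge> 0"
  shows "\<exists>e s :: nat. gen_A (\<lambda>(e', s'). c1 * real e' + c2 * real s') (e, s)
                       > c3 * (c1 * real e + c2 * real s) + c4"
proof -
  define e where "e = Suc (nat \<lceil>c3\<rceil>)"
  have e: "c3 + 1 \<le> real e" unfolding e_def by linarith
  define s where "s = Suc (nat \<lceil>(c3 * c1 * real e + c4) / c2\<rceil>)"
  have "(c3 * c1 * real e + c4) / c2 < real s" unfolding s_def by linarith
  then have s: "c3 * c1 * real e + c4 < c2 * real s"
    using assms(2) by (simp add: field_simps)
  have "c3 * (c1 * real e + c2 * real s) + c4 = (c3 * c1 * real e + c4) + c3 * (c2 * real s)"
    by (simp add: algebra_simps)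
  also have "\<dots> < (c3 + 1) * (c2 * real s)"
    using s by (simp add: algebra_simps)
  also have "\<dots> \<le> real e * (c2 * real s)"
    using e assms by (intro mult_right_mono) auto
  also have "\<dots> \<le> real e * c1 + real e * real s * c2"
    using assms by simp
  finally have "c3 * (c1 * real e + c2 * real s) + c4 < real e * c1 + real e * real s * c2" .
  then show ?thesis
    by (intro exI[of _ e] exI[of _ s]) (simp add: gen_A_def algebra_simps)
qed

lemma sum_set_mset_count_mult:
  fixes f :: "'a \<Rightarrow> real"
  shows "(\<Sum>x\<in>set_mset n. real (count n x) * f x) = (\<Sum>x\<in>#n. f x)"
proof (induction n)
  case (add a M)
  have "(\<Sum>x\<in>set_mset (add_mset a M). real (count (add_mset a M) x) * f x)
      = (\<Sum>x\<in>insert a (set_mset M). real (count M x) * f x + (if x = a then f a else 0))"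
    by (rule sum.cong) (auto simp: algebra_simps)
  also have "\<dots> = (\<Sum>x\<in>insert a (set_mset M). real (count M x) * f x) + f a"
    by (simp add: sum.distrib)
  also have "(\<Sum>x\<in>insert a (set_mset M). real (count M x) * f x)
      = (\<Sum>x\<in>set_mset M. real (count M x) * f x)"
    by (rule sum.mono_neutral_right) (auto simp: count_eq_zero_iff)
  finally show ?case using add by simp
qed simp

lemma sum_if_eq_mult_le:
  fixes G :: "'b \<Rightarrow> real"
  assumes "0 \<le> w * G a"
  shows "(\<Sum>m\<in>A. (if m = a then w else 0) * G m) \<le> w * G a"
proof -
  have "(\<Sum>m\<in>A. (if m = a then w else 0) * G m) = (\<Sum>m\<in>A. if m = a then w * G a else 0)"
    by (rule sum.cong) auto
  also have "\<dots> \<le> w * G a"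
    using assms by (cases "finite A") (simp_all add: sum.delta)
  finally show ?thesis .
qed

definition compartment_rate :: "(nat \<times> nat \<Rightarrow> nat \<times> nat \<Rightarrow> real) \<Rightarrow> (nat \<times> nat) multiset
    \<Rightarrow> nat \<times> nat \<Rightarrow> (nat \<times> nat) multiset \<Rightarrow> real" where
  "compartment_rate \<psi> n x m = (case x of (e, s) \<Rightarrow>
      (if m = n - {#x#} + {#(Suc e, s)#} then real e else 0)
    + (if m = n - {#x#} + {#(e, Suc s)#} then real e * real s else 0)
    + real s * (\<Sum>y\<in>{y. fst y \<le> e \<and> snd y \<le> s}.
        if m = n - {#x#} + {#y, (e - fst y, s - snd y)#} then \<psi> x y else 0))"

definition compartment_weighted_rate :: "(nat \<times> nat \<Rightarrow> nat \<times> nat \<Rightarrow> real)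
    \<Rightarrow> ((nat \<times> nat) multiset \<Rightarrow> real) \<Rightarrow> (nat \<times> nat) multiset \<Rightarrow> nat \<times> nat \<Rightarrow> real" where
  "compartment_weighted_rate \<psi> G n x = (case x of (e, s) \<Rightarrow>
      real e * G (n - {#x#} + {#(Suc e, s)#})
    + real e * real s * G (n - {#x#} + {#(e, Suc s)#})
    + real s * (\<Sum>y\<in>{y. fst y \<le> e \<and> snd y \<le> s}.
        \<psi> x y * G (n - {#x#} + {#y, (e - fst y, s - snd y)#})))"

lemma q_N_eq_sum_compartment_rate:
  "m \<noteq> n \<Longrightarrow> q_N \<psi> n m = (\<Sum>x\<in>set_mset n. real (count n x) * compartment_rate \<psi> n x m)"
  unfolding q_N_def compartment_rate_def by simp

lemma q_N_nonneg:
  assumes "\<And>x y. 0 \<le> \<psi> x y"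
  shows "0 \<le> q_N \<psi> n m"
  unfolding q_N_def
  by (auto intro!: sum_nonneg mult_nonneg_nonneg add_nonneg_nonneg simp: assms split: prod.split)

lemma sum_compartment_rate_mult_le:
  fixes G :: "(nat \<times> nat) multiset \<Rightarrow> real"
  assumes "\<And>m. 0 \<le> G m" and "\<And>x y. 0 \<le> \<psi> x y"
  shows "(\<Sum>m\<in>A. compartment_rate \<psi> n x m * G m) \<le> compartment_weighted_rate \<psi> G n x"
proof -
  obtain e s where x: "x = (e, s)" by force
  let ?Y = "{y. fst y \<le> e \<and> snd y \<le> s}"
  let ?a\<^sub>1 = "n - {#x#} + {#(Suc e, s)#}"
  let ?a\<^sub>2 = "n - {#x#} + {#(e, Suc s)#}"
  let ?a\<^sub>3 = "\<lambda>y. n - {#x#} + {#y, (e - fst y, s - snd y)#}"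
  have "(\<Sum>m\<in>A. compartment_rate \<psi> n x m * G m) =
      (\<Sum>m\<in>A. (if m = ?a\<^sub>1 then real e else 0) * G m)
    + (\<Sum>m\<in>A. (if m = ?a\<^sub>2 then real e * real s else 0) * G m)
    + real s * (\<Sum>y\<in>?Y. \<Sum>m\<in>A. (if m = ?a\<^sub>3 y then \<psi> x y else 0) * G m)"
    unfolding compartment_rate_def x
    by (simp add: sum.distrib algebra_simps sum_distrib_left sum_distrib_right sum.swap[of _ A ?Y])
  also have "\<dots> \<le> compartment_weighted_rate \<psi> G n x"
    unfolding compartment_weighted_rate_def x prod.case
    by (intro add_mono sum_if_eq_mult_le mult_left_mono sum_mono) (use assms in auto)
  finally show ?thesis .
qed

lemma sum_q_N_mult_le:
  fixes G :: "(nat \<times> nat) multiset \<Rightarrow> real"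
  assumes "\<And>m. 0 \<le> G m" and "\<And>x y. 0 \<le> \<psi> x y"
  shows "(\<Sum>m\<in>jump_support (q_N \<psi>) n. q_N \<psi> n m * G m)
    \<le> (\<Sum>x\<in>set_mset n. real (count n x) * compartment_weighted_rate \<psi> G n x)"
proof -
  let ?A = "jump_support (q_N \<psi>) n"
  have "(\<Sum>m\<in>?A. q_N \<psi> n m * G m)
      = (\<Sum>m\<in>?A. \<Sum>x\<in>set_mset n. real (count n x) * (compartment_rate \<psi> n x m * G m))"
    by (rule sum.cong)
       (auto simp: jump_support_def q_N_eq_sum_compartment_rate sum_distrib_right mult.assoc)
  also have "\<dots> = (\<Sum>x\<in>set_mset n. real (count n x) * (\<Sum>m\<in>?A. compartment_rate \<psi> n x m * G m))"
    by (simp add: sum.swap[of _ "set_mset n" ?A] sum_distrib_left)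
  also have "\<dots> \<le> (\<Sum>x\<in>set_mset n. real (count n x) * compartment_weighted_rate \<psi> G n x)"
    by (intro sum_mono mult_left_mono sum_compartment_rate_mult_le assms) auto
  finally show ?thesis .
qed

definition E_tot :: "(nat \<times> nat) multiset \<Rightarrow> nat" where
  "E_tot n = (\<Sum>x\<in>#n. fst x)"

definition S_tot :: "(nat \<times> nat) multiset \<Rightarrow> nat" where
  "S_tot n = (\<Sum>x\<in>#n. snd x)"

lemma E_tot_simps [simp]:
  "E_tot {#} = 0" "E_tot (add_mset x N) = fst x + E_tot N" "E_tot (M + N) = E_tot M + E_tot N"
  by (simp_all add: E_tot_def)

lemma S_tot_simps [simp]:
  "S_tot {#} = 0" "S_tot (add_mset x N) = snd x + S_tot N" "S_tot (M + N) = S_tot M + S_tot N"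
  by (simp_all add: S_tot_def)

lemma le_totals:
  assumes "x \<in># n"
  shows "fst x \<le> E_tot n" "snd x \<le> S_tot n"
  using assms by (auto dest!: multi_member_split)

lemma E_tot_eq_sum_count: "real (E_tot n) = (\<Sum>x\<in>set_mset n. real (count n x) * real (fst x))"
  unfolding E_tot_def sum_set_mset_count_mult by (simp add: of_nat_sum_mset multiset.map_comp o_def)

lemma S_tot_eq_sum_count: "real (S_tot n) = (\<Sum>x\<in>set_mset n. real (count n x) * real (snd x))"
  unfolding S_tot_def sum_set_mset_count_mult by (simp add: of_nat_sum_mset multiset.map_comp o_def)

definition lyap_tot :: "(nat \<times> nat) multiset \<Rightarrow> real" where
  "lyap_tot n = lyap (E_tot n) (S_tot n)"

lemma lyap_tot_remove_add:
  assumes "x \<in># n"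
  shows "lyap_tot (n - {#x#} + N) = lyap (E_tot n - fst x + E_tot N) (S_tot n - snd x + S_tot N)"
  using assms by (auto simp: lyap_tot_def dest!: multi_member_split)

lemma compartment_weighted_rate_lyap_tot_le:
  assumes "x \<in># n"
  shows "compartment_weighted_rate \<psi> (\<lambda>m. max 0 (lyap_tot m - lyap_tot n)) n x \<le> 2 * real (fst x)"
proof -
  obtain e s where x: "x = (e, s)" by force
  let ?G = "\<lambda>m. max 0 (lyap_tot m - lyap_tot n)"
  let ?S = "S_tot n"
  have G: "?G (n - {#x#} + N)
      = max 0 (lyap (E_tot n - e + E_tot N) (?S - s + S_tot N) - lyap (E_tot n) ?S)" for N
    unfolding lyap_tot_remove_add[OF assms] by (simp add: x lyap_tot_def)
  have "e \<le> E_tot n" "s \<le> ?S" using le_totals[OF assms] by (simp_all add: x)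
  then have G\<^sub>1: "?G (n - {#x#} + {#(Suc e, s)#}) = 1"
    and G\<^sub>2: "?G (n - {#x#} + {#(e, Suc s)#}) = ln (1 + real (Suc ?S)) - ln (1 + real ?S)"
    using G[of "{#(Suc e, s)#}"] G[of "{#(e, Suc s)#}"] by (simp_all add: lyap_def)
  have G\<^sub>3: "?G (n - {#x#} + {#y, (e - fst y, s - snd y)#}) = 0" if "fst y \<le> e \<and> snd y \<le> s" for y
    using G[of "{#y, (e - fst y, s - snd y)#}"] that \<open>e \<le> E_tot n\<close> \<open>s \<le> ?S\<close> by (simp add: lyap_def)
  have "(\<Sum>y\<in>{y. fst y \<le> e \<and> snd y \<le> s}.
      \<psi> x y * ?G (n - {#x#} + {#y, (e - fst y, s - snd y)#})) = 0"
    using G\<^sub>3 by (intro sum.neutral) auto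
  moreover have "real e * (real s * ?G (n - {#x#} + {#(e, Suc s)#})) \<le> real e * 1"
    unfolding G\<^sub>2 using \<open>s \<le> ?S\<close> by (intro mult_left_mono mult_ln_Suc_diff_le) auto
  ultimately show ?thesis
    using G\<^sub>1 by (simp add: compartment_weighted_rate_def x)
qed

lemma generator_q_N_lyap_tot_le:
  assumes "\<And>x y. 0 \<le> \<psi> x y"
  shows "generator (q_N \<psi>) lyap_tot n \<le> 2 * lyap_tot n"
proof -
  let ?G = "\<lambda>m. max 0 (lyap_tot m - lyap_tot n)"
  \<comment> \<open>The weight must be nonnegative: the per-compartment rates also count jumps back to n
    (splitting off an empty compartment), which the jump support omits.\<close>
  have "generator (q_N \<psi>) lyap_tot n \<le> (\<Sum>m\<in>jump_support (q_N \<psi>) n. q_N \<psi> n m * ?G m)"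
    unfolding generator_def by (intro sum_mono mult_left_mono q_N_nonneg assms) auto
  also have "\<dots> \<le> (\<Sum>x\<in>set_mset n. real (count n x) * compartment_weighted_rate \<psi> ?G n x)"
    by (rule sum_q_N_mult_le) (simp_all add: assms)
  also have "\<dots> \<le> (\<Sum>x\<in>set_mset n. real (count n x) * (2 * real (fst x)))"
    by (intro sum_mono mult_left_mono compartment_weighted_rate_lyap_tot_le) auto
  also have "\<dots> = 2 * real (E_tot n)"
    by (simp add: E_tot_eq_sum_count sum_distrib_left algebra_simps)
  also have "\<dots> \<le> 2 * lyap_tot n"
    by (simp add: lyap_tot_def lyap_def)
  finally show ?thesis .
qed

lemma total_rate_q_N_le:
  assumes "frag_kernel \<psi>"
  shows "total_rate (q_N \<psi>) n \<le> real (E_tot n) * (1 + real (S_tot n)) + real (S_tot n)"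
proof -
  have "\<And>x y. 0 \<le> \<psi> x y" and \<psi>_sum: "\<And>x. (\<Sum>y\<in>{y. fst y \<le> fst x \<and> snd y \<le> snd x}. \<psi> x y) = 1"
    using assms unfolding frag_kernel_def by blast+
  have "total_rate (q_N \<psi>) n = (\<Sum>m\<in>jump_support (q_N \<psi>) n. q_N \<psi> n m * 1)"
    by (simp add: total_rate_def)
  also have "\<dots> \<le> (\<Sum>x\<in>set_mset n. real (count n x) * compartment_weighted_rate \<psi> (\<lambda>_. 1) n x)"
    by (rule sum_q_N_mult_le) (simp_all add: \<open>\<And>x y. 0 \<le> \<psi> x y\<close>)
  also have "\<dots> \<le> (\<Sum>x\<in>set_mset n. real (count n x) * real (fst x) * (1 + real (S_tot n))
      + real (count n x) * real (snd x))"
  proof (rule sum_mono)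
    fix x assume "x \<in> set_mset n"
    then have "real (fst x) * real (snd x) \<le> real (fst x) * real (S_tot n)"
      using le_totals(2) by (intro mult_left_mono) auto
    then have "compartment_weighted_rate \<psi> (\<lambda>_. 1) n x \<le> real (fst x) * (1 + real (S_tot n)) + real (snd x)"
      using \<psi>_sum[of x] by (auto simp: compartment_weighted_rate_def algebra_simps split: prod.split)
    from mult_left_mono[OF this, of "real (count n x)"]
    show "real (count n x) * compartment_weighted_rate \<psi> (\<lambda>_. 1) n x
        \<le> real (count n x) * real (fst x) * (1 + real (S_tot n)) + real (count n x) * real (snd x)"
      by (simp add: algebra_simps)
  qed
  also have "\<dots> = real (E_tot n) * (1 + real (S_tot n)) + real (S_tot n)"
    by (simp add: E_tot_eq_sum_count S_tot_eq_sum_count sum.distrib sum_distrib_right)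
  finally show ?thesis .
qed

lemma non_explosive_q_N:
  assumes "frag_kernel \<psi>"
  shows "non_explosive (q_N \<psi>)"
proof (rule non_explosive_lyapunov[where V = lyap_tot and c = 2])
  have \<psi>_nonneg: "\<And>x y. 0 \<le> \<psi> x y"
    using assms unfolding frag_kernel_def by blast
  show "0 \<le> q_N \<psi> n m" for n m
    using \<psi>_nonneg by (rule q_N_nonneg)
  show "generator (q_N \<psi>) lyap_tot n \<le> 2 * lyap_tot n" for n
    using \<psi>_nonneg by (rule generator_q_N_lyap_tot_le)
  show "bdd_above (total_rate (q_N \<psi>) ` {n. lyap_tot n < M})" for M
  proof (rule bdd_aboveI2)
    fix n assume "n \<in> {n. lyap_tot n < M}"
    then have "real (E_tot n) \<le> M" "real (S_tot n) \<le> exp M"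
      using lyap_less_imp_bounds unfolding lyap_tot_def by (auto intro: less_imp_le)
    then have "real (E_tot n) * (1 + real (S_tot n)) + real (S_tot n) \<le> M * (1 + exp M) + exp M"
      by (intro add_mono mult_mono) auto
    then show "total_rate (q_N \<psi>) n \<le> M * (1 + exp M) + exp M"
      using total_rate_q_N_le[OF assms, of n] by linarith
  qed
qed (auto simp: lyap_tot_def lyap_def)

theorem proposition3p5:
  shows "non_explosive q_chem \<and>
    (\<forall>c1 c2 c3 c4 :: real. c1 > 0 \<longrightarrow> c2 > 0 \<longrightarrow> c3 \<ge> 0 \<longrightarrow> c4 \<ge> 0 \<longrightarrow>
       (\<exists>e s :: nat. gen_A (\<lambda>(e', s'). c1 * real e' + c2 * real s') (e, s)
                       > c3 * (c1 * real e + c2 * real s) + c4)) \<and>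
    (\<forall>\<psi>. frag_kernel \<psi> \<longrightarrow> non_explosive (q_N \<psi>))"
  using non_explosive_q_chem gen_A_linear_not_affinely_bounded non_explosive_q_N by blast

end
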